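(* A set $\mathcal{O}$ of upwards-closed modalities is decomposable if and only if, for all $r,r'\in TT\mathbf{1}$, whenever $r\preccurlyeq r'$, then for all $o\in\mathcal{O}$, $\mu r\in o(\{*\})$ implies $\mu r'\in o(\{*\})$.
   Context: $\Sigma$ is a signature of effect operations with arities $\alpha^n\to\alpha$, $\mathbf{N}\times\alpha^n\to\alpha$, $\alpha^{\mathbf{N}}\to\alpha$ or $\mathbf{N}\times\alpha^{\mathbf{N}}\to\alpha$. $TX$ is the set of possibly infinite labelled trees with leaves $\bot$ or elements of $X$ and internal nodes labelled by operations (or $\sigma_m$, $m\in\mathbb{N}$) with children according to arity; $t\le t'$ iff $t$ is obtained from $t'$ by replacing subtrees with $\bot$. $\mu:TTX\to TX$ is the monad multiplication, replacing each leaf of a tree of trees by that tree. $\mathbf{1}=\{*\}$. A set $\mathcal{O}$ of modalities is given with $[\![o]\!]\subseteq T\mathbf{1}$; upwards closed means $[\![o]\!]$ is upward closed under $\le$. $t[\in P]\in T\mathbf{1}$ replaces leaves in $P$ by $*$ and other $X$-leaves by $\bot$; $o(A)=\{t\in TX\mid t[\in A]\in[\![o]\!]\}$. $\mathcal{T}$ is the least class of formulas containing $o(\top),o(\bot)$ ($o\in\mathcal{O}$) closed under arbitrary $\bigvee,\bigwedge$, with $[\![o(\top)]\!]=o(\{*\})$, $[\![o(\bot)]\!]=o(\emptyset)$, unions/intersections. On $T\mathbf{1}$: $t\trianglelefteq t'$ iff $\forall\Phi\in\mathcal{T}$, $t\in[\![\Phi]\!]\Rightarrow t'\in[\![\Phi]\!]$.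 On $TT\mathbf{1}$: $r\preccurlyeq r'$ iff $\forall o\,\forall\Phi\in\mathcal{T}$, $r\in o([\![\Phi]\!])\Rightarrow r'\in o([\![\Phi]\!])$. $\mathcal{O}$ is decomposable if for all $r,r'\in TT\mathbf{1}$, $r\preccurlyeq r'$ implies $\mu r\trianglelefteq\mu r'$. *)

theory Defs
  imports Main
begin

text \<open>A signature is given by a type
  of node labels 'l (an operation, or an operation together with its natural-number
  parameter m) and an arity map ar: Some n means arity alpha^n, None means arity alpha^N.
  Children are indexed by nat; for a finite arity n the children at positions >= n are
  padding and required to be Bot (see wf_tree).\<close>

codatatype ('l, 'x) tree = Bot | Leaf 'x | Node 'l "nat \<Rightarrow> ('l, 'x) tree"

coinductive wf_tree :: "('l \<Rightarrow> nat option) \<Rightarrow> 'x set \<Rightarrow> ('l, 'x) tree \<Rightarrow> bool"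
  for ar :: "'l \<Rightarrow> nat option" and L :: "'x set" where
  wf_Bot: "wf_tree ar L Bot"
| wf_Leaf: "x \<in> L \<Longrightarrow> wf_tree ar L (Leaf x)"
| wf_Node: "(\<forall>i. wf_tree ar L (c i)) \<Longrightarrow> (\<forall>n. ar l = Some n \<longrightarrow> (\<forall>i\<ge>n. c i = Bot))
             \<Longrightarrow> wf_tree ar L (Node l c)"

definition TT :: "('l \<Rightarrow> nat option) \<Rightarrow> 'x set \<Rightarrow> ('l, 'x) tree set" where
  "TT ar X = {t. wf_tree ar X t}"

coinductive tle :: "('l, 'x) tree \<Rightarrow> ('l, 'x) tree \<Rightarrow> bool" where
  tle_Bot: "tle Bot t"
| tle_Leaf: "tle (Leaf x) (Leaf x)"
| tle_Node: "(\<forall>i. tle (c i) (c' i)) \<Longrightarrow> tle (Node l c) (Node l c')"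

text \<open>Monad multiplication: replace each leaf of a tree of trees by that tree.\<close>
primcorec mu_aux :: "(('l, ('l, 'x) tree) tree + ('l, 'x) tree) \<Rightarrow> ('l, 'x) tree" where
  "mu_aux s = (case s of
      Inl r \<Rightarrow> (case r of
          Bot \<Rightarrow> Bot
        | Leaf t \<Rightarrow> (case t of Bot \<Rightarrow> Bot | Leaf x \<Rightarrow> Leaf x
                       | Node l c \<Rightarrow> Node l (\<lambda>i. mu_aux (Inr (c i))))
        | Node l c \<Rightarrow> Node l (\<lambda>i. mu_aux (Inl (c i))))
    | Inr t \<Rightarrow> (case t of Bot \<Rightarrow> Bot | Leaf x \<Rightarrow> Leaf x
                  | Node l c \<Rightarrow> Node l (\<lambda>i. mu_aux (Inr (c i)))))"

definition mu :: "('l, ('l, 'x) tree) tree \<Rightarrow> ('l, 'x) tree" where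
  "mu r = mu_aux (Inl r)"

primcorec restr :: "'x set \<Rightarrow> ('l, 'x) tree \<Rightarrow> ('l, unit) tree" where
  "restr P t = (case t of
      Bot \<Rightarrow> Bot
    | Leaf x \<Rightarrow> (if x \<in> P then Leaf () else Bot)
    | Node l c \<Rightarrow> Node l (\<lambda>i. restr P (c i)))"

text \<open>o(A) = {t \<in> TX | t[\<in>A] \<in> [[o]]}; sem md is [[o]].\<close>
definition omod :: "('l \<Rightarrow> nat option) \<Rightarrow> ('o \<Rightarrow> ('l, unit) tree set) \<Rightarrow> 'o \<Rightarrow> 'x set
                    \<Rightarrow> ('l, 'x) tree set" where
  "omod ar sem md A = {t \<in> TT ar UNIV. restr A t \<in> sem md}"

text \<open>Denotations of the formulas in the class \<T>: least class containing o(top), o(bot)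
  for o in Mods, closed under arbitrary disjunctions and conjunctions (interpreted in T 1).\<close>
inductive_set Tsem :: "('l \<Rightarrow> nat option) \<Rightarrow> 'o set \<Rightarrow> ('o \<Rightarrow> ('l, unit) tree set)
                       \<Rightarrow> ('l, unit) tree set set"
  for ar Mods sem where
  Tsem_top: "md \<in> Mods \<Longrightarrow> omod ar sem md {()} \<in> Tsem ar Mods sem"
| Tsem_bot: "md \<in> Mods \<Longrightarrow> omod ar sem md {} \<in> Tsem ar Mods sem"
| Tsem_Sup: "(\<forall>A\<in>S. A \<in> Tsem ar Mods sem) \<Longrightarrow> \<Union>S \<in> Tsem ar Mods sem"
| Tsem_Inf: "(\<forall>A\<in>S. A \<in> Tsem ar Mods sem) \<Longrightarrow> (\<Inter>S) \<inter> TT ar UNIV \<in> Tsem ar Mods sem"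

definition upwards_closed :: "('l \<Rightarrow> nat option) \<Rightarrow> ('l, unit) tree set \<Rightarrow> bool" where
  "upwards_closed ar P \<longleftrightarrow> (\<forall>t\<in>P. \<forall>t'\<in>TT ar UNIV. tle t t' \<longrightarrow> t' \<in> P)"

definition tpre :: "('l \<Rightarrow> nat option) \<Rightarrow> 'o set \<Rightarrow> ('o \<Rightarrow> ('l, unit) tree set)
                    \<Rightarrow> ('l, unit) tree \<Rightarrow> ('l, unit) tree \<Rightarrow> bool" where
  "tpre ar Mods sem t t' \<longleftrightarrow> (\<forall>\<Phi>\<in>Tsem ar Mods sem. t \<in> \<Phi> \<longrightarrow> t' \<in> \<Phi>)"

definition rpre :: "('l \<Rightarrow> nat option) \<Rightarrow> 'o set \<Rightarrow> ('o \<Rightarrow> ('l, unit) tree set)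
                    \<Rightarrow> ('l, ('l, unit) tree) tree \<Rightarrow> ('l, ('l, unit) tree) tree \<Rightarrow> bool" where
  "rpre ar Mods sem r r' \<longleftrightarrow>
     (\<forall>md\<in>Mods. \<forall>\<Phi>\<in>Tsem ar Mods sem. r \<in> omod ar sem md \<Phi> \<longrightarrow> r' \<in> omod ar sem md \<Phi>)"

definition decomposable :: "('l \<Rightarrow> nat option) \<Rightarrow> 'o set \<Rightarrow> ('o \<Rightarrow> ('l, unit) tree set) \<Rightarrow> bool" where
  "decomposable ar Mods sem \<longleftrightarrow>
     (\<forall>r\<in>TT ar (TT ar UNIV). \<forall>r'\<in>TT ar (TT ar UNIV).
        rpre ar Mods sem r r' \<longrightarrow> tpre ar Mods sem (mu r) (mu r'))"

end

theory Submission
  imports Defs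
begin

text \<open>Since every formula is built from the basic formulas o(top) and o(bot) by unions and
  intersections, the order on T 1 is determined by them, so it suffices to transfer o(bot).
  Killing every leaf of the inner trees, r0 = T(t \<mapsto> t[\<in>{}]) r, turns mu r \<in> o({}) into
  mu r0 \<in> o({*}); and r0 \<in> o(\<Phi>) iff r \<in> o({t. t[\<in>{}] \<in> \<Phi>}), where the latter set is
  again a formula, so r \<preccurlyeq> r' yields r0 \<preccurlyeq> r0' and the hypothesis on o(top) applies.\<close>

lemma tree_eq_coinduct [consumes 1, case_names Eq]:
  assumes "R a b"
    and "\<And>a b. R a b \<Longrightarrow> (a = Bot \<and> b = Bot) \<or> (\<exists>x. a = Leaf x \<and> b = Leaf x) \<or>
           (\<exists>l c c'. a = Node l c \<and> b = Node l c' \<and> (\<forall>i. R (c i) (c' i) \<or> c i = c' i))"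
  shows "a = b"
  using assms(1)
proof (coinduction arbitrary: a b rule: tree.coinduct_strong)
  case (Eq_tree a b)
  from assms(2)[OF Eq_tree] show ?case by (auto simp: rel_fun_def)
qed

lemma restr_simps [simp]:
  "restr P Bot = Bot"
  "restr P (Leaf x) = (if x \<in> P then Leaf () else Bot)"
  "restr P (Node l c) = Node l (\<lambda>i. restr P (c i))"
  by (subst restr.code; simp)+

lemma mu_aux_Inr: "mu_aux (Inr t) = t"
  by (coinduction arbitrary: t rule: tree_eq_coinduct) (auto simp: mu_aux.code split: tree.split)

lemma mu_simps [simp]:
  "mu Bot = Bot"
  "mu (Leaf t) = t"
  "mu (Node l c) = Node l (\<lambda>i. mu (c i))"
  unfolding mu_def by (subst mu_aux.code; auto simp: mu_aux_Inr split: tree.split)+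

lemma restr_restr: "restr P (restr Q t) = restr {x \<in> Q. () \<in> P} t"
proof (coinduction arbitrary: t rule: tree_eq_coinduct)
  case (Eq t)
  show ?case by (cases t) auto
qed

lemma restr_map_tree: "restr P (map_tree id f t) = restr (f -` P) t"
proof (coinduction arbitrary: t rule: tree_eq_coinduct)
  case (Eq t)
  show ?case by (cases t) auto
qed

lemma restr_Int_leaves:
  assumes "t \<in> TT ar L" shows "restr (A \<inter> L) t = restr A t"
  using assms unfolding TT_def mem_Collect_eq
proof (coinduction arbitrary: t rule: tree_eq_coinduct)
  case (Eq t)
  then show ?case by (cases rule: wf_tree.cases) auto
qed

lemma mu_map_restr: "mu (map_tree id (restr P) r) = restr P (mu r)"
proof (coinduction arbitrary: r rule: tree_eq_coinduct)
  case (Eq r)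
  show ?case
  proof (cases r)
    case (Leaf t)
    then show ?thesis by (cases t) auto
  qed auto
qed

lemma TT_mono: "L \<subseteq> L' \<Longrightarrow> TT ar L \<subseteq> TT ar L'"
  unfolding TT_def
proof (intro subsetI CollectI, elim CollectE)
  fix t assume "L \<subseteq> L'" "wf_tree ar L t"
  then show "wf_tree ar L' t"
  proof (coinduction arbitrary: t rule: wf_tree.coinduct)
    case (wf_tree t)
    from \<open>wf_tree ar L t\<close> show ?case using \<open>L \<subseteq> L'\<close> by (cases rule: wf_tree.cases) auto
  qed
qed

lemma restr_in_TT: "t \<in> TT ar L \<Longrightarrow> restr P t \<in> TT ar UNIV"
  unfolding TT_def mem_Collect_eq
proof (coinduction arbitrary: t rule: wf_tree.coinduct)
  case (wf_tree t)
  then show ?case by (cases rule: wf_tree.cases) auto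
qed

lemma map_tree_in_TT: "t \<in> TT ar L \<Longrightarrow> f ` L \<subseteq> L' \<Longrightarrow> map_tree id f t \<in> TT ar L'"
  unfolding TT_def mem_Collect_eq
proof (coinduction arbitrary: t rule: wf_tree.coinduct)
  case (wf_tree t)
  then show ?case by (cases rule: wf_tree.cases) auto
qed

lemma mu_in_TT: "r \<in> TT ar (TT ar L) \<Longrightarrow> mu r \<in> TT ar L"
  unfolding TT_def mem_Collect_eq
proof (coinduction arbitrary: r rule: wf_tree.coinduct)
  case (wf_tree r)
  then show ?case
  proof (cases rule: wf_tree.cases)
    case (wf_Leaf t)
    then have "wf_tree ar L t" by simp
    then show ?thesis using wf_Leaf by (cases rule: wf_tree.cases) auto
  qed auto
qed

lemma Tsem_vimage_restr_empty:
  assumes "\<Phi> \<in> Tsem ar Mods sem"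
  shows "{t \<in> TT ar UNIV. restr {} t \<in> \<Phi>} \<in> Tsem ar Mods sem"
  using assms
proof (induction rule: Tsem.induct)
  case (Tsem_top md)
  have "{t \<in> TT ar (UNIV :: unit set). restr {} t \<in> omod ar sem md {()}} = omod ar sem md {}"
    by (auto simp: omod_def restr_restr restr_in_TT)
  then show ?case using Tsem.Tsem_bot[where ar = ar and sem = sem, OF Tsem_top] by simp
next
  case (Tsem_bot md)
  have "{t \<in> TT ar (UNIV :: unit set). restr {} t \<in> omod ar sem md {}} = omod ar sem md {}"
    by (auto simp: omod_def restr_restr restr_in_TT)
  then show ?case using Tsem.Tsem_bot[where ar = ar and sem = sem, OF Tsem_bot] by simp
next
  case (Tsem_Sup S)
  have "{t \<in> TT ar (UNIV :: unit set). restr {} t \<in> \<Union>S} =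
      \<Union>((\<lambda>A. {t \<in> TT ar UNIV. restr {} t \<in> A}) ` S)"
    by auto
  moreover have "\<Union>((\<lambda>A. {t \<in> TT ar UNIV. restr {} t \<in> A}) ` S) \<in> Tsem ar Mods sem"
    using Tsem_Sup by (auto intro: Tsem.Tsem_Sup)
  ultimately show ?case by simp
next
  case (Tsem_Inf S)
  have "{t \<in> TT ar (UNIV :: unit set). restr {} t \<in> \<Inter>S \<inter> TT ar UNIV} =
      \<Inter>((\<lambda>A. {t \<in> TT ar UNIV. restr {} t \<in> A}) ` S) \<inter> TT ar UNIV"
    by (auto simp: restr_in_TT)
  moreover have "\<Inter>((\<lambda>A. {t \<in> TT ar UNIV. restr {} t \<in> A}) ` S) \<inter> TT ar UNIV \<in> Tsem ar Mods sem"
    using Tsem_Inf by (auto intro: Tsem.Tsem_Inf)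
  ultimately show ?case by simp
qed

lemma map_restr_in_TT: "r \<in> TT ar (TT ar L) \<Longrightarrow> map_tree id (restr P) r \<in> TT ar (TT ar UNIV)"
  by (erule map_tree_in_TT) (auto intro: restr_in_TT)

lemma omod_map_restr_iff:
  assumes "r \<in> TT ar (TT ar UNIV)"
  shows "map_tree id (restr Q) r \<in> omod ar sem md \<Phi> \<longleftrightarrow>
    r \<in> omod ar sem md {t \<in> TT ar UNIV. restr Q t \<in> \<Phi>}"
proof -
  have "restr \<Phi> (map_tree id (restr Q) r) = restr (restr Q -` \<Phi>) r"
    by (rule restr_map_tree)
  also have "\<dots> = restr (restr Q -` \<Phi> \<inter> TT ar UNIV) r"
    using restr_Int_leaves[OF assms] by metis
  also have "restr Q -` \<Phi> \<inter> TT ar UNIV = {t \<in> TT ar UNIV. restr Q t \<in> \<Phi>}"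
    by auto
  finally have "restr \<Phi> (map_tree id (restr Q) r) = restr {t \<in> TT ar UNIV. restr Q t \<in> \<Phi>} r" .
  moreover have "map_tree id (restr Q) r \<in> TT ar UNIV" "r \<in> TT ar UNIV"
    using map_restr_in_TT[OF assms] assms TT_mono[of "TT ar UNIV" UNIV ar] by auto
  ultimately show ?thesis
    by (simp add: omod_def)
qed

lemma rpre_map_restr_empty:
  assumes "r \<in> TT ar (TT ar UNIV)" "r' \<in> TT ar (TT ar UNIV)" "rpre ar Mods sem r r'"
  shows "rpre ar Mods sem (map_tree id (restr {}) r) (map_tree id (restr {}) r')"
  unfolding rpre_def
proof (intro ballI impI)
  fix md \<Phi> assume "md \<in> Mods" "\<Phi> \<in> Tsem ar Mods sem"
    and "map_tree id (restr {}) r \<in> omod ar sem md \<Phi>"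
  with assms Tsem_vimage_restr_empty[of \<Phi> ar Mods sem]
  show "map_tree id (restr {}) r' \<in> omod ar sem md \<Phi>"
    by (auto simp: rpre_def omod_map_restr_iff)
qed

lemma mu_in_omod_empty_iff:
  assumes "r \<in> TT ar (TT ar UNIV)"
  shows "mu r \<in> omod ar sem md {} \<longleftrightarrow> mu (map_tree id (restr {}) r) \<in> omod ar sem md {()}"
  using mu_in_TT[OF assms] restr_in_TT
  by (auto simp: omod_def mu_map_restr restr_restr)

lemma tpre_iff_generators:
  assumes "t' \<in> TT ar UNIV"
  shows "tpre ar Mods sem t t' \<longleftrightarrow>
    (\<forall>md\<in>Mods. \<forall>A\<in>{{}, {()}}. t \<in> omod ar sem md A \<longrightarrow> t' \<in> omod ar sem md A)"
proof
  assume "tpre ar Mods sem t t'"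
  then show "\<forall>md\<in>Mods. \<forall>A\<in>{{}, {()}}. t \<in> omod ar sem md A \<longrightarrow> t' \<in> omod ar sem md A"
    by (auto simp: tpre_def intro: Tsem.intros)
next
  assume gen: "\<forall>md\<in>Mods. \<forall>A\<in>{{}, {()}}. t \<in> omod ar sem md A \<longrightarrow> t' \<in> omod ar sem md A"
  show "tpre ar Mods sem t t'"
    unfolding tpre_def
  proof (intro ballI impI)
    fix \<Phi> assume "\<Phi> \<in> Tsem ar Mods sem" "t \<in> \<Phi>"
    then show "t' \<in> \<Phi>"
      by (induction rule: Tsem.induct) (use gen assms in auto)
  qed
qed

theorem lemma4p16:
  fixes ar :: "'l \<Rightarrow> nat option"
    and Mods :: "'o set"
    and sem :: "'o \<Rightarrow> ('l, unit) tree set"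
  assumes "\<forall>md\<in>Mods. sem md \<subseteq> TT ar UNIV"
    and "\<forall>md\<in>Mods. upwards_closed ar (sem md)"
  shows "decomposable ar Mods sem \<longleftrightarrow>
    (\<forall>r\<in>TT ar (TT ar UNIV). \<forall>r'\<in>TT ar (TT ar UNIV).
       rpre ar Mods sem r r' \<longrightarrow>
       (\<forall>md\<in>Mods. mu r \<in> omod ar sem md {()} \<longrightarrow> mu r' \<in> omod ar sem md {()}))"
    (is "_ \<longleftrightarrow> (\<forall>r\<in>_. \<forall>r'\<in>_. _ \<longrightarrow> ?top r r')")
proof
  assume "decomposable ar Mods sem"
  then show "\<forall>r\<in>TT ar (TT ar UNIV). \<forall>r'\<in>TT ar (TT ar UNIV). rpre ar Mods sem r r' \<longrightarrow> ?top r r'"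
    by (auto simp: decomposable_def tpre_iff_generators mu_in_TT)
next
  assume top: "\<forall>r\<in>TT ar (TT ar UNIV). \<forall>r'\<in>TT ar (TT ar UNIV). rpre ar Mods sem r r' \<longrightarrow> ?top r r'"
  show "decomposable ar Mods sem"
    unfolding decomposable_def
  proof (intro ballI impI)
    fix r r' assume r: "r \<in> TT ar (TT ar UNIV)" and r': "r' \<in> TT ar (TT ar UNIV)"
      and rr': "rpre ar Mods sem r r'"
    let ?kill = "map_tree id (restr {})"
    have "?top (?kill r) (?kill r')"
      using top map_restr_in_TT[OF r] map_restr_in_TT[OF r'] rpre_map_restr_empty[OF r r' rr']
      by blast
    then have "\<forall>md\<in>Mods. mu r \<in> omod ar sem md {} \<longrightarrow> mu r' \<in> omod ar sem md {}"
      by (simp add: mu_in_omod_empty_iff[OF r] mu_in_omod_empty_iff[OF r'])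
    moreover have "?top r r'"
      using top r r' rr' by blast
    ultimately show "tpre ar Mods sem (mu r) (mu r')"
      by (auto simp: tpre_iff_generators mu_in_TT[OF r'])
  qed
qed

end
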